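(* Let $\alpha\in\mathbb R$ and let $(x(s),z(s),\psi(s))$ be a solution of the system $$x'=\cos\psi,\quad z'=\sin\psi,\quad \psi'=\alpha\,\frac{z\cos\psi-x\sin\psi}{x^2+z^2}-\frac{\sin\psi}{x},$$ with initial conditions $(x(0),z(0))=(1,0)$, $\psi(0)=\pi/2$. Then the curve $\gamma(s)=(x(s),0,z(s))$ is symmetric about the $x$-axis.
   Context: The system describes the arc-length parametrized generating curve $\gamma$ of a surface of revolution about the $z$-axis satisfying $H=\alpha\langle\nu,p\rangle/|p|^2$ ($H$ the sum of the principal curvatures); the initial conditions mean $\gamma$ meets the $x$-axis orthogonally at $(1,0,0)$. *)

theory Defs
  imports "HOL-Analysis.Analysis"
begin

end

theory Submission
  imports Defs
begin

(*
  Write the system as y' = F(y) for y = (x, z, \<psi>). The field F is Lipschitz on every region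
  d \<le> |x|, |x| \<le> M, |z| \<le> M with d > 0, and it is reversible with respect to the reflection
  \<sigma>(x, z, \<psi>) = (x, -z, \<pi> - \<psi>) of the curve in the x-axis: F(\<sigma> p) is F(p) with its
  first component negated, so t \<mapsto> \<sigma>(y(-t)) solves the system whenever y does. Both
  solutions start at (1, 0, \<pi>/2) = \<sigma>(1, 0, \<pi>/2) and on a compact time interval stay in
  such a region, so Gronwall's estimate for |y(t) - \<sigma>(y(-t))|\<^sup>2 makes them coincide:
  x(-t) = x(t) and z(-t) = -z(t).
*)

lemma lipschitz_on_sin: "1-lipschitz_on U (sin :: real \<Rightarrow> real)"
proof (rule lipschitz_onI)
  fix a b :: real
  have "\<bar>sin a - sin b\<bar> = 2 * \<bar>sin ((a - b) / 2)\<bar> * \<bar>cos ((a + b) / 2)\<bar>"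
    by (simp add: sin_diff_sin abs_mult)
  also have "\<dots> \<le> 2 * \<bar>(a - b) / 2\<bar> * 1"
    by (intro mult_mono abs_sin_x_le_abs_x) auto
  finally show "dist (sin a) (sin b) \<le> 1 * dist a b"
    by (simp add: dist_real_def)
qed simp

lemma lipschitz_on_cos: "1-lipschitz_on U (cos :: real \<Rightarrow> real)"
proof (rule lipschitz_onI)
  fix a b :: real
  have "\<bar>cos a - cos b\<bar> = 2 * \<bar>sin ((a + b) / 2)\<bar> * \<bar>sin ((b - a) / 2)\<bar>"
    by (simp add: cos_diff_cos abs_mult)
  also have "\<dots> \<le> 2 * 1 * \<bar>(b - a) / 2\<bar>"
    by (intro mult_mono abs_sin_x_le_abs_x) auto
  finally show "dist (cos a) (cos b) \<le> 1 * dist a b"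
    by (simp add: dist_real_def)
qed simp

lemma lipschitz_on_fst: "1-lipschitz_on U fst"
  by (rule lipschitz_onI) (simp_all add: dist_fst_le)

lemma lipschitz_on_snd: "1-lipschitz_on U snd"
  by (rule lipschitz_onI) (simp_all add: dist_snd_le)

lemma lipschitz_on_mult_bounded:
  fixes f g :: "'a::metric_space \<Rightarrow> 'b::real_normed_algebra"
  assumes f: "C-lipschitz_on U f" and g: "D-lipschitz_on U g"
    and A: "0 \<le> A" "\<And>x. x \<in> U \<Longrightarrow> norm (f x) \<le> A"
    and B: "0 \<le> B" "\<And>x. x \<in> U \<Longrightarrow> norm (g x) \<le> B"
  shows "(A * D + B * C)-lipschitz_on U (\<lambda>x. f x * g x)"
proof (rule lipschitz_onI)
  fix x y assume xy: "x \<in> U" "y \<in> U"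
  have "f x * g x - f y * g y = f x * (g x - g y) + (f x - f y) * g y"
    by (simp add: algebra_simps)
  then have "dist (f x * g x) (f y * g y)
      \<le> norm (f x) * dist (g x) (g y) + dist (f x) (f y) * norm (g y)"
    by (metis dist_norm norm_mult_ineq norm_triangle_le add_mono)
  also have "\<dots> \<le> A * (D * dist x y) + (C * dist x y) * B"
    using xy lipschitz_onD[OF f xy] lipschitz_onD[OF g xy] A B
      lipschitz_on_nonneg[OF f] lipschitz_on_nonneg[OF g]
    by (intro add_mono mult_mono) auto
  finally show "dist (f x * g x) (f y * g y) \<le> (A * D + B * C) * dist x y"
    by (simp add: algebra_simps)
next
  show "0 \<le> A * D + B * C"
    using A B lipschitz_on_nonneg[OF f] lipschitz_on_nonneg[OF g] by simp
qed

lemma lipschitz_on_inverse_bounded_below: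
  fixes f :: "'a::metric_space \<Rightarrow> 'b::real_normed_div_algebra"
  assumes f: "C-lipschitz_on U f" and m: "0 < m" "\<And>x. x \<in> U \<Longrightarrow> m \<le> norm (f x)"
  shows "(C / m\<^sup>2)-lipschitz_on U (\<lambda>x. inverse (f x))"
proof (rule lipschitz_onI)
  fix x y assume xy: "x \<in> U" "y \<in> U"
  have nz: "f x \<noteq> 0" "f y \<noteq> 0" using m xy by (metis norm_zero not_le)+
  have "dist (inverse (f x)) (inverse (f y))
      = norm (inverse (f x)) * dist (f x) (f y) * norm (inverse (f y))"
    by (simp add: dist_norm inverse_diff_inverse nz norm_mult)
  also have "\<dots> \<le> inverse m * (C * dist x y) * inverse m"
    using xy m lipschitz_onD[OF f xy] lipschitz_on_nonneg[OF f]
    by (intro mult_mono) (auto simp: norm_inverse intro!: le_imp_inverse_le)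
  finally show "dist (inverse (f x)) (inverse (f y)) \<le> C / m\<^sup>2 * dist x y"
    by (simp add: field_simps power2_eq_square)
qed (use lipschitz_on_nonneg[OF f] in simp)

lemma lipschitz_on_divide_bounded:
  fixes f g :: "'a::metric_space \<Rightarrow> 'b::real_normed_field"
  assumes f: "C-lipschitz_on U f" and g: "D-lipschitz_on U g"
    and A: "0 \<le> A" "\<And>x. x \<in> U \<Longrightarrow> norm (f x) \<le> A"
    and m: "0 < m" "\<And>x. x \<in> U \<Longrightarrow> m \<le> norm (g x)"
  shows "(A * (D / m\<^sup>2) + inverse m * C)-lipschitz_on U (\<lambda>x. f x / g x)"
proof -
  have "norm (inverse (g x)) \<le> inverse m" if "x \<in> U" for x
    using m(2)[OF that] m(1) by (simp add: norm_inverse le_imp_inverse_le)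
  with m(1) have "(A * (D / m\<^sup>2) + inverse m * C)-lipschitz_on U (\<lambda>x. f x * inverse (g x))"
    by (intro lipschitz_on_mult_bounded f lipschitz_on_inverse_bounded_below g A m) auto
  then show ?thesis
    by (simp add: divide_inverse)
qed

lemma nonneg_vanishes_if_deriv_le_linear:
  fixes u u' :: "real \<Rightarrow> real"
  assumes u: "\<And>s. s \<in> {0..T} \<Longrightarrow> (u has_real_derivative u' s) (at s within {0..T})"
    and u'_le: "\<And>s. s \<in> {0..T} \<Longrightarrow> u' s \<le> K * u s"
    and u_nonneg: "\<And>s. s \<in> {0..T} \<Longrightarrow> 0 \<le> u s"
    and u0: "u 0 = 0" and t: "t \<in> {0..T}"
  shows "u t = 0"
proof -
  define v where "v s = u s * exp (- K * s)" for s
  have v': "(v has_real_derivative (u' s - K * u s) * exp (- K * s)) (at s within {0..T})"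
    if "s \<in> {0..T}" for s
    unfolding v_def by (rule derivative_eq_intros u that refl | simp add: algebra_simps)+
  have "v t \<le> v 0"
  proof (rule DERIV_nonpos_imp_decreasing_open[of 0 t v])
    show "0 \<le> t" using t by simp
    have "continuous_on {0..T} v" by (rule DERIV_continuous_on[OF v'])
    then show "continuous_on {0..t} v"
      by (rule continuous_on_subset) (use t in auto)
    fix s assume s: "0 < s" "s < t"
    then have "(v has_real_derivative (u' s - K * u s) * exp (- K * s)) (at s)"
      using v'[of s] t by (simp add: at_within_Icc_at)
    moreover have "(u' s - K * u s) * exp (- K * s) \<le> 0"
      using u'_le[of s] s t by (intro mult_nonpos_nonneg) auto
    ultimately show "\<exists>y. (v has_real_derivative y) (at s) \<and> y \<le> 0" by blast
  qed
  then have "u t \<le> 0" by (simp add: v_def u0 mult_le_0_iff)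
  with u_nonneg[OF t] show ?thesis by simp
qed

lemma lipschitz_ode_solutions_unique:
  fixes p q :: "real \<Rightarrow> 'a::real_inner"
  assumes lip: "L-lipschitz_on D F"
    and in_D: "\<And>s. s \<in> {0..T} \<Longrightarrow> p s \<in> D" "\<And>s. s \<in> {0..T} \<Longrightarrow> q s \<in> D"
    and p': "\<And>s. s \<in> {0..T} \<Longrightarrow> (p has_vector_derivative F (p s)) (at s within {0..T})"
    and q': "\<And>s. s \<in> {0..T} \<Longrightarrow> (q has_vector_derivative F (q s)) (at s within {0..T})"
    and init: "p 0 = q 0" and t: "t \<in> {0..T}"
  shows "p t = q t"
proof -
  define e where "e s = p s - q s" for s
  define e' where "e' s = F (p s) - F (q s)" for s
  have "(norm (e t))\<^sup>2 = 0"
  proof (rule nonneg_vanishes_if_deriv_le_linear[where u = "\<lambda>s. (norm (e s))\<^sup>2"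
        and u' = "\<lambda>s. 2 * inner (e s) (e' s)" and K = "2 * L"])
    fix s assume s: "s \<in> {0..T}"
    have "(e has_vector_derivative e' s) (at s within {0..T})"
      unfolding e_def e'_def by (intro derivative_intros p' q' s)
    then show "((\<lambda>s. (norm (e s))\<^sup>2) has_real_derivative 2 * inner (e s) (e' s))
        (at s within {0..T})"
      unfolding has_real_derivative_iff_has_vector_derivative power2_norm_eq_inner
        has_vector_derivative_def
      by (auto intro!: derivative_eq_intros simp: inner_commute algebra_simps)
    have "inner (e s) (e' s) \<le> norm (e s) * norm (e' s)"
      by (rule norm_cauchy_schwarz)
    also have "\<dots> \<le> norm (e s) * (L * norm (e s))"
      unfolding e_def e'_def using lipschitz_on_normD[OF lip in_D[OF s]]
      by (intro mult_left_mono) auto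
    finally show "2 * inner (e s) (e' s) \<le> 2 * L * (norm (e s))\<^sup>2"
      by (simp add: power2_eq_square algebra_simps)
  qed (use init t in \<open>simp_all add: e_def\<close>)
  then show ?thesis by (simp add: e_def)
qed

lemma has_vector_derivative_reflect:
  assumes "(f has_vector_derivative f') (at (- t) within S)"
  shows "((\<lambda>t. f (- t)) has_vector_derivative - f') (at t within uminus ` S)"
proof -
  have "(uminus has_vector_derivative -1) (at t within uminus ` S)"
    by (auto intro!: derivative_eq_intros)
  moreover have "uminus ` uminus ` S = S" by (simp add: image_image)
  ultimately show ?thesis
    using vector_diff_chain_within[of uminus "-1" t "uminus ` S" f f'] assms by (simp add: o_def)
qed

definition generating_curve_field :: "real \<Rightarrow> real \<times> real \<times> real \<Rightarrow> real \<times> real \<times> real" where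
  "generating_curve_field \<alpha> = (\<lambda>(X, Z, P).
     (cos P, sin P, \<alpha> * (Z * cos P - X * sin P) / (X\<^sup>2 + Z\<^sup>2) - sin P / X))"

lemma lipschitz_on_generating_curve_field:
  assumes "0 < d"
  obtains L where
    "L-lipschitz_on {(X, Z, P). d \<le> \<bar>X\<bar> \<and> \<bar>X\<bar> \<le> M \<and> \<bar>Z\<bar> \<le> M} (generating_curve_field \<alpha>)"
proof -
  define K :: "(real \<times> real \<times> real) set"
    where "K = {(X, Z, P). d \<le> \<bar>X\<bar> \<and> \<bar>X\<bar> \<le> M \<and> \<bar>Z\<bar> \<le> M}"
  have bounds: "d \<le> norm (fst p)" "norm (fst p) \<le> \<bar>M\<bar>" "norm (fst (snd p)) \<le> \<bar>M\<bar>"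
    if "p \<in> K" for p
    using that by (auto simp: K_def)
  have trig_bounds: "norm (cos (snd (snd p))) \<le> 1" "norm (sin (snd (snd p))) \<le> 1"
    for p :: "real \<times> real \<times> real"
    by simp_all
  have num_bound:
    "norm (fst (snd p) * cos (snd (snd p)) - fst p * sin (snd (snd p))) \<le> 2 * \<bar>M\<bar>"
    if "p \<in> K" for p
  proof -
    have "\<bar>fst (snd p) * cos (snd (snd p))\<bar> \<le> \<bar>M\<bar> * 1" "\<bar>fst p * sin (snd (snd p))\<bar> \<le> \<bar>M\<bar> * 1"
      unfolding abs_mult using bounds[OF that] by (intro mult_mono; simp)+
    then show ?thesis by simp
  qed
  have den_bound: "d\<^sup>2 \<le> norm (fst p * fst p + fst (snd p) * fst (snd p))" if "p \<in> K" for p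
  proof -
    have "d\<^sup>2 \<le> (fst p)\<^sup>2" using bounds(1)[OF that] assms
      by (metis power2_abs power_mono real_norm_def less_imp_le)
    then show ?thesis by (simp add: power2_eq_square add_increasing2)
  qed
  have M0: "0 \<le> \<bar>M\<bar>" "0 \<le> 2 * \<bar>M\<bar>" and d0: "0 < d\<^sup>2"
    using assms by simp_all
  note X = lipschitz_on_fst[of K]
  note Z = lipschitz_on_compose2[OF lipschitz_on_snd[of K] lipschitz_on_fst]
  note P = lipschitz_on_compose2[OF lipschitz_on_snd[of K] lipschitz_on_snd]
  note cosP = lipschitz_on_compose2[OF P lipschitz_on_cos]
  note sinP = lipschitz_on_compose2[OF P lipschitz_on_sin]
  note num = lipschitz_on_diff[OF
    lipschitz_on_mult_bounded[OF Z cosP M0(1) bounds(3) zero_le_one trig_bounds(1)]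
    lipschitz_on_mult_bounded[OF X sinP M0(1) bounds(2) zero_le_one trig_bounds(2)]]
  note den = lipschitz_on_add[OF
    lipschitz_on_mult_bounded[OF X X M0(1) bounds(2) M0(1) bounds(2)]
    lipschitz_on_mult_bounded[OF Z Z M0(1) bounds(3) M0(1) bounds(3)]]
  note third = lipschitz_on_diff[OF
    lipschitz_on_cmult_real[OF lipschitz_on_divide_bounded[OF num den M0(2) num_bound d0 den_bound]]
    lipschitz_on_divide_bounded[OF sinP X zero_le_one trig_bounds(2) assms bounds(1)]]
  note field = lipschitz_on_Pair[OF cosP lipschitz_on_Pair[OF sinP third]]
  show ?thesis
    by (rule that[folded K_def], rule lipschitz_on_transform[OF field])
      (auto simp: generating_curve_field_def power2_eq_square)
qed

definition axis_reflection :: "real \<times> real \<times> real \<Rightarrow> real \<times> real \<times> real" where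
  "axis_reflection = (\<lambda>(X, Z, P). (X, - Z, pi - P))"

lemma has_vector_derivative_axis_reflection:
  assumes "(w has_vector_derivative (a, b, c)) (at t within S)"
  shows "((\<lambda>t. axis_reflection (w t)) has_vector_derivative (a, - b, - c)) (at t within S)"
  using assms unfolding axis_reflection_def has_vector_derivative_def case_prod_beta
  by (auto intro!: derivative_eq_intros)

lemma generating_curve_field_axis_reflection:
  "generating_curve_field \<alpha> (axis_reflection p) =
     (case generating_curve_field \<alpha> p of (a, b, c) \<Rightarrow> (- a, b, c))"
  by (simp add: generating_curve_field_def axis_reflection_def case_prod_beta)

lemma has_vector_derivative_reflected_solution:
  assumes "(y has_vector_derivative generating_curve_field \<alpha> (y (- t))) (at (- t) within S)"
  shows "((\<lambda>t. axis_reflection (y (- t))) has_vector_derivative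
           generating_curve_field \<alpha> (axis_reflection (y (- t)))) (at t within uminus ` S)"
proof -
  obtain a b c where abc: "generating_curve_field \<alpha> (y (- t)) = (a, b, c)"
    by (metis prod_cases3)
  have "((\<lambda>t. y (- t)) has_vector_derivative (- a, - b, - c)) (at t within uminus ` S)"
    using has_vector_derivative_reflect[OF assms] by (simp add: abc)
  from has_vector_derivative_axis_reflection[OF this] show ?thesis
    by (simp add: generating_curve_field_axis_reflection abc)
qed

lemma trajectory_bounded_away_from_axis:
  fixes y :: "real \<Rightarrow> real \<times> real \<times> real"
  assumes cont: "continuous_on {-T..T} y" and "0 \<le> T"
    and ne0: "\<And>s. s \<in> {-T..T} \<Longrightarrow> fst (y s) \<noteq> 0"
  obtains d M where "0 < d" "\<And>s. s \<in> {-T..T} \<Longrightarrow>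
    d \<le> \<bar>fst (y s)\<bar> \<and> \<bar>fst (y s)\<bar> \<le> M \<and> \<bar>fst (snd (y s))\<bar> \<le> M"
proof -
  obtain M where M: "\<And>s. s \<in> {-T..T} \<Longrightarrow> norm (y s) \<le> M"
    using compact_imp_bounded[OF compact_continuous_image[OF cont compact_Icc]]
    unfolding bounded_iff by blast
  have "continuous_on {-T..T} (\<lambda>s. \<bar>fst (y s)\<bar>)"
    using cont by (intro continuous_intros)
  moreover have "{-T..T} \<noteq> {}"
    using \<open>0 \<le> T\<close> by simp
  ultimately obtain m where m: "m \<in> {-T..T}"
    "\<And>s. s \<in> {-T..T} \<Longrightarrow> \<bar>fst (y m)\<bar> \<le> \<bar>fst (y s)\<bar>"
    using continuous_attains_inf[OF compact_Icc] by blast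
  show ?thesis
  proof (rule that)
    show "0 < \<bar>fst (y m)\<bar>"
      using ne0[OF m(1)] by simp
    fix s assume s: "s \<in> {-T..T}"
    obtain X Z P where XZP: "y s = (X, Z, P)"
      by (metis prod_cases3)
    have "\<bar>X\<bar> \<le> M" "\<bar>Z\<bar> \<le> M"
      using M[OF s] norm_fst_le[of X "(Z, P)"] norm_snd_le[of "(Z, P)" X] norm_fst_le[of Z P]
      by (auto simp: XZP)
    with m(2)[OF s] show "\<bar>fst (y m)\<bar> \<le> \<bar>fst (y s)\<bar> \<and> \<bar>fst (y s)\<bar> \<le> M \<and> \<bar>fst (snd (y s))\<bar> \<le> M"
      by (simp add: XZP)
  qed
qed

lemma generating_curve_solution_symmetric:
  fixes y :: "real \<Rightarrow> real \<times> real \<times> real"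
  assumes sub: "{-T..T} \<subseteq> I"
    and ne0: "\<And>s. s \<in> I \<Longrightarrow> fst (y s) \<noteq> 0"
    and y': "\<And>s. s \<in> I \<Longrightarrow> (y has_vector_derivative generating_curve_field \<alpha> (y s)) (at s within I)"
    and y0: "axis_reflection (y 0) = y 0"
    and t: "t \<in> {0..T}"
  shows "y t = axis_reflection (y (- t))"
proof -
  have "continuous_on I y"
    using y' has_vector_derivative_continuous continuous_on_eq_continuous_within by blast
  then have "continuous_on {-T..T} y"
    using sub by (rule continuous_on_subset)
  then obtain d M where "0 < d" and bounds: "\<And>s. s \<in> {-T..T} \<Longrightarrow>
      d \<le> \<bar>fst (y s)\<bar> \<and> \<bar>fst (y s)\<bar> \<le> M \<and> \<bar>fst (snd (y s))\<bar> \<le> M"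
    by (rule trajectory_bounded_away_from_axis) (use t ne0 sub in auto)
  define K :: "(real \<times> real \<times> real) set"
    where "K = {(X, Z, P). d \<le> \<bar>X\<bar> \<and> \<bar>X\<bar> \<le> M \<and> \<bar>Z\<bar> \<le> M}"
  obtain L where L: "L-lipschitz_on K (generating_curve_field \<alpha>)"
    using lipschitz_on_generating_curve_field[OF \<open>0 < d\<close>] unfolding K_def by blast
  have in_K: "y s \<in> K" "axis_reflection (y s) \<in> K" if "s \<in> {-T..T}" for s
    using bounds[OF that] by (auto simp: K_def axis_reflection_def case_prod_beta)
  show ?thesis
  proof (rule lipschitz_ode_solutions_unique[OF L,
        where p = y and q = "\<lambda>t. axis_reflection (y (- t))"])
    fix s assume s: "s \<in> {0..T}"
    then show "y s \<in> K" "axis_reflection (y (- s)) \<in> K"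
      by (auto intro: in_K)
    show "(y has_vector_derivative generating_curve_field \<alpha> (y s)) (at s within {0..T})"
      using s sub by (intro has_vector_derivative_within_subset[OF y']) auto
    have "{0..T} \<subseteq> uminus ` I"
      using image_mono[OF sub, of uminus] by auto
    with s sub show "((\<lambda>t. axis_reflection (y (- t))) has_vector_derivative
        generating_curve_field \<alpha> (axis_reflection (y (- s)))) (at s within {0..T})"
      by (intro has_vector_derivative_within_subset[OF
          has_vector_derivative_reflected_solution[OF y']]) auto
  qed (use y0 t in simp_all)
qed

theorem mainTheorem14:
  fixes \<alpha> :: real and x z \<psi> :: "real \<Rightarrow> real" and I :: "real set"
  assumes I_int: "is_interval I" and I0: "0 \<in> I"
    and x_ne0: "\<forall>s\<in>I. x s \<noteq> 0"
    and dx: "\<forall>s\<in>I. (x has_real_derivative cos (\<psi> s)) (at s within I)"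
    and dz: "\<forall>s\<in>I. (z has_real_derivative sin (\<psi> s)) (at s within I)"
    and dpsi: "\<forall>s\<in>I. (\<psi> has_real_derivative
                 (\<alpha> * (z s * cos (\<psi> s) - x s * sin (\<psi> s)) / ((x s)\<^sup>2 + (z s)\<^sup>2)
                  - sin (\<psi> s) / x s)) (at s within I)"
    and init: "x 0 = 1" "z 0 = 0" "\<psi> 0 = pi / 2"
  shows "\<forall>s. s \<in> I \<and> - s \<in> I \<longrightarrow> x (- s) = x s \<and> z (- s) = - z s"
proof (intro allI impI)
  fix s assume s: "s \<in> I \<and> - s \<in> I"
  define y where "y t = (x t, z t, \<psi> t)" for t
  have y': "(y has_vector_derivative generating_curve_field \<alpha> (y t)) (at t within I)"
    if "t \<in> I" for t
    using dx dz dpsi that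
    unfolding y_def generating_curve_field_def has_real_derivative_iff_has_vector_derivative
    by (auto intro!: has_vector_derivative_Pair)
  have "{-\<bar>s\<bar>..\<bar>s\<bar>} \<subseteq> I"
    using s I_int unfolding is_interval_1 by (auto simp: abs_if)
  moreover have "axis_reflection (y 0) = y 0"
    using init by (simp add: y_def axis_reflection_def)
  ultimately have "y \<bar>s\<bar> = axis_reflection (y (- \<bar>s\<bar>))"
    by (intro generating_curve_solution_symmetric[OF _ _ y']) (use x_ne0 in \<open>auto simp: y_def\<close>)
  then show "x (- s) = x s \<and> z (- s) = - z s"
    by (cases "0 \<le> s") (auto simp: y_def axis_reflection_def)
qed

end
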